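(* Let $\bm G\in\{0,1\}^{n\times k}$ be a partition indicator matrix, $\bm\Omega\in[0,1]^{k\times k}$ symmetric, $\bm{\mathcal A}=\bm G\bm\Omega\bm G^\top$ of rank $k$ with all entries of $\bm{\mathcal A}\bm1$ positive, and $\bm{\mathcal L}=\operatorname{diag}(\bm{\mathcal A}\bm1)^{-1/2}\bm{\mathcal A}\operatorname{diag}(\bm{\mathcal A}\bm1)^{-1/2}$. Let $\bm v_1,\ldots,\bm v_k$ be orthonormal eigenvectors of $\bm{\mathcal L}$ corresponding to its $k$ nonzero eigenvalues. Then each column of $\bm G$ is a linear combination of $\bm v_1,\ldots,\bm v_k$.
   Context: A partition indicator matrix $\bm G$ has exactly one entry $1$ in each row and each column nonzero. $\bm1$ is the all-ones vector and $\operatorname{diag}(\bm x)$ the diagonal matrix with diagonal $\bm x$. *)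

theory Defs
  imports "HOL-Analysis.Analysis"
begin

definition partition_indicator :: "real^'k^'n \<Rightarrow> bool" where
  "partition_indicator G \<longleftrightarrow>
     (\<forall>i j. G $ i $ j = 0 \<or> G $ i $ j = 1) \<and>
     (\<forall>i. \<exists>!j. G $ i $ j = 1) \<and>
     (\<forall>j. \<exists>i. G $ i $ j \<noteq> 0)"

definition diag_mat :: "real^'n \<Rightarrow> real^'n^'n" where
  "diag_mat x = (\<chi> i j. if i = j then x $ i else 0)"

text \<open>Entrywise inverse square root of a vector, so diag(x)^(-1/2) = diag_mat (inv_sqrt_vec x)
  for x with positive entries.\<close>
definition inv_sqrt_vec :: "real^'n \<Rightarrow> real^'n" where
  "inv_sqrt_vec x = (\<chi> i. 1 / sqrt (x $ i))"

end

theory Submission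
  imports Defs
begin

text \<open>The degree vector \<open>\<A>1\<close> is constant on clusters, so \<open>diag(\<A>1)^(-1/2) G = G diag(c)\<close>
  for a vector \<open>c\<close> indexed by clusters, and hence \<open>\<L> = G X\<close> for some matrix \<open>X\<close>. Every
  eigenvector of \<open>\<L>\<close> with nonzero eigenvalue therefore lies in the column space of \<open>G\<close>,
  whose dimension is at most \<open>k\<close>; \<open>k\<close> orthonormal such eigenvectors span all of it.\<close>

definition cluster :: "real^'k^'n \<Rightarrow> 'n \<Rightarrow> 'k" where
  "cluster G i = (THE j. G $ i $ j = 1)"

lemma partition_indicator_entry:
  assumes "partition_indicator G"
  shows "G $ i $ j = (if j = cluster G i then 1 else 0)"
proof -
  have unique: "\<exists>!j. G $ i $ j = 1"
    using assms unfolding partition_indicator_def by blast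
  then have "G $ i $ cluster G i = 1"
    unfolding cluster_def by (rule theI')
  with unique assms show ?thesis
    unfolding partition_indicator_def by metis
qed

lemma row_partition_indicator_mult:
  assumes "partition_indicator G"
  shows "(G ** B) $ i = B $ cluster G i"
  by (simp add: vec_eq_iff matrix_matrix_mult_def partition_indicator_entry[OF assms]
      mult_if_delta)

lemma diag_mat_mult_partition_indicator:
  assumes "partition_indicator G" and "\<And>i. w $ i = c $ cluster G i"
  shows "diag_mat w ** G = G ** diag_mat c"
  by (simp add: vec_eq_iff matrix_matrix_mult_def diag_mat_def assms
      partition_indicator_entry[OF assms(1)] if_distrib[of "\<lambda>a. a * _"] cong: if_cong)

lemma normalized_block_matrix_factor:
  fixes G :: "real^'k^'n" and C :: "real^'n^'k"
  assumes "partition_indicator G"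
  defines "w \<equiv> inv_sqrt_vec ((G ** C) *v 1)"
  shows "diag_mat w ** (G ** C) ** diag_mat w
           = G ** (diag_mat (inv_sqrt_vec (C *v 1)) ** C ** diag_mat w)"
proof -
  have "w $ i = inv_sqrt_vec (C *v 1) $ cluster G i" for i
    by (simp add: w_def inv_sqrt_vec_def matrix_vector_mult_def
        row_partition_indicator_mult[OF assms(1)])
  then have "diag_mat w ** G = G ** diag_mat (inv_sqrt_vec (C *v 1))"
    by (rule diag_mat_mult_partition_indicator[OF assms(1)])
  then show ?thesis
    by (metis matrix_mul_assoc)
qed

lemma eigenvector_in_columnspace:
  fixes A :: "real^'m^'n"
  assumes "(A ** B) *v x = lam *\<^sub>R x" and "lam \<noteq> 0"
  shows "x \<in> span (columns A)"
proof -
  have "x = (1 / lam) *\<^sub>R (A *v (B *v x))"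
    using assms by (simp add: matrix_vector_mul_assoc)
  then show ?thesis
    by (metis span_mul scaleR_conv_of_real matrix_vector_mult_in_columnspace)
qed

lemma span_orthonormal_eq_span_columns:
  fixes A :: "real^'k^'n" and v :: "'k \<Rightarrow> real^'n"
  assumes orthonormal: "\<And>a b. v a \<bullet> v b = (if a = b then 1 else 0)"
    and sub: "range v \<subseteq> span (columns A)"
  shows "span (range v) = span (columns A)"
proof (rule subspace_dim_equal)
  have "inj v"
    by (rule injI) (metis orthonormal zero_neq_one)
  moreover have "independent (range v)"
  proof (rule pairwise_orthogonal_independent)
    show "pairwise orthogonal (range v)"
      unfolding pairwise_def orthogonal_def using orthonormal by auto
    show "0 \<notin> range v"
      using orthonormal by (metis image_iff inner_zero_left zero_neq_one)
  qed
  ultimately have "dim (span (range v)) = CARD('k)"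
    by (simp add: dim_eq_card_independent card_image)
  moreover have "dim (span (columns A)) \<le> CARD('k)"
  proof -
    have columns_image: "columns A = (\<lambda>j. column j A) ` UNIV"
      by (auto simp: columns_def)
    have "dim (span (columns A)) \<le> card (columns A)"
      by (rule dim_le_card) (simp_all add: columns_image)
    also have "\<dots> \<le> CARD('k)"
      unfolding columns_image by (rule card_image_le) simp
    finally show ?thesis .
  qed
  ultimately show "dim (span (columns A)) \<le> dim (span (range v))"
    by simp
  show "span (range v) \<subseteq> span (columns A)"
    using sub by (simp add: span_minimal)
qed auto

theorem corollaryA3:
  fixes G :: "real^'k^'n" and \<Omega> :: "real^'k^'k"
    and v :: "'k \<Rightarrow> real^'n" and lam :: "'k \<Rightarrow> real"
  assumes G: "partition_indicator G"
    and \<Omega>_sym: "transpose \<Omega> = \<Omega>"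
    and \<Omega>_range: "\<And>a b. 0 \<le> \<Omega> $ a $ b \<and> \<Omega> $ a $ b \<le> 1"
    and rank: "rank (G ** \<Omega> ** transpose G) = CARD('k)"
    and deg_pos: "\<And>i. ((G ** \<Omega> ** transpose G) *v 1) $ i > 0"
    and orthonormal: "\<And>a b. v a \<bullet> v b = (if a = b then 1 else 0)"
    and eigen: "\<And>a. (diag_mat (inv_sqrt_vec ((G ** \<Omega> ** transpose G) *v 1))
                      ** (G ** \<Omega> ** transpose G)
                      ** diag_mat (inv_sqrt_vec ((G ** \<Omega> ** transpose G) *v 1))) *v v a
                    = lam a *\<^sub>R v a"
    and nonzero: "\<And>a. lam a \<noteq> 0"
  shows "\<forall>j. column j G \<in> span (range v)"
proof -
  define C where "C = \<Omega> ** transpose G"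
  have "G ** \<Omega> ** transpose G = G ** C"
    by (simp add: C_def matrix_mul_assoc)
  then have "range v \<subseteq> span (columns G)"
    using eigen nonzero normalized_block_matrix_factor[OF G]
    by (auto intro: eigenvector_in_columnspace)
  then have "span (range v) = span (columns G)"
    using orthonormal by (rule span_orthonormal_eq_span_columns[rotated])
  then show ?thesis
    by (auto simp: columns_def intro: span_base)
qed

end
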